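(* The set of $S$-gap shifts with entropy $\log(\frac{1+\sqrt5}{2})$ is countably infinite. Moreover, infinitely many of these $S$-gap shifts have the specification property.
   Context: For a nonempty set $S\subseteq\{0,1,2,\dots\}$, the $S$-gap shift $X(S)\subseteq\{0,1\}^{\mathbb{Z}}$ is the set of bi-infinite binary sequences in which the number of consecutive zeros between ones is always an element of $S$. The entropy of a shift $X$ is $h(X)=\lim_n\frac1n\log|\mathcal{B}_n(X)|$, where $\mathcal{B}_n(X)$ is the set of words of length $n$ occurring in points of $X$ and $\log$ is to base $2$. $X$ has the specification property if there is $N\ge1$ such that for all $u,v\in\mathcal{B}(X)=\bigcup_n\mathcal{B}_n(X)$ there exists $w\in\mathcal{B}_N(X)$ with $uwv\in\mathcal{B}(X)$. *)

theory Defs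
  imports Complex_Main "HOL-Library.Countable_Set"
begin

text \<open>Bi-infinite binary sequences are functions int \<Rightarrow> bool (True = symbol 1, False = 0).
Words are lists of bool.\<close>

text \<open>The S-gap shift X(S) (standard closed version): between any two consecutive ones the
number of zeros lies in S, and every block of k consecutive zeros is bounded by some
element of S (this only restricts finite S; it is exactly the closure of the set of
points with all gaps in S).\<close>
definition gap_shift :: "nat set \<Rightarrow> (int \<Rightarrow> bool) set" where
  "gap_shift S = {x.
     (\<forall>i j. i < j \<and> x i \<and> x j \<and> (\<forall>k. i < k \<and> k < j \<longrightarrow> \<not> x k)
            \<longrightarrow> nat (j - i - 1) \<in> S) \<and>
     (\<forall>i (k::nat). (\<forall>m<k. \<not> x (i + int m)) \<longrightarrow> (\<exists>s\<in>S. k \<le> s))}"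

definition blocks :: "(int \<Rightarrow> bool) set \<Rightarrow> nat \<Rightarrow> bool list set" where
  "blocks X n = {w. length w = n \<and> (\<exists>x\<in>X. \<exists>i. \<forall>m<n. w ! m = x (i + int m))}"

definition language :: "(int \<Rightarrow> bool) set \<Rightarrow> bool list set" where
  "language X = (\<Union>n. blocks X n)"

definition has_entropy :: "(int \<Rightarrow> bool) set \<Rightarrow> real \<Rightarrow> bool" where
  "has_entropy X h \<longleftrightarrow> ((\<lambda>n. log 2 (real (card (blocks X n))) / real n) \<longlonglongrightarrow> h)"

definition has_specification :: "(int \<Rightarrow> bool) set \<Rightarrow> bool" where
  "has_specification X \<longleftrightarrow> (\<exists>N\<ge>1. \<forall>u\<in>language X. \<forall>v\<in>language X.
      \<exists>w\<in>blocks X N. u @ w @ v \<in> language X)"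

end

theory Submission
  imports Defs "HOL-Real_Asymp.Real_Asymp"
begin

text \<open>
  Put \<open>q = 1/\<phi>\<close>, so that \<open>q + q^2 = 1\<close>, and call \<open>\<Sum>s\<in>S. r^-(s+1)\<close> the
  \<open>r\<close>-weight of \<open>S\<close>. Cutting a block at its first one bounds the number of blocks of
  length \<open>n\<close> by \<open>(n+1)^2 r^n\<close> when every partial \<open>r\<close>-weight of \<open>S\<close> is at most \<open>1\<close>;
  conversely, if a finite \<open>F \<subseteq> S\<close> has \<open>r\<close>-weight at least \<open>1\<close>, concatenating words
  \<open>1 0^s\<close> with \<open>s \<in> F\<close> produces at least \<open>c r^n\<close> blocks. Hence entropy \<open>log \<phi>\<close> forces
  the \<open>q\<close>-weight of \<open>S\<close> to be exactly \<open>1\<close>. Since \<open>q + q^2 = 1 = \<Sum>s\<ge>1. q^(s+1)\<close>, such an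
  \<open>S\<close> is \<open>{1,2,\<dots>}\<close> if \<open>0 \<notin> S\<close>, it is \<open>{0,1}\<close> if \<open>0, 1 \<in> S\<close>, and otherwise
  \<open>{s. s + 2 \<in> S}\<close> again has \<open>q\<close>-weight \<open>1\<close>. Iterating, \<open>S\<close> is the set of even numbers,
  or \<open>{0,2,\<dots>,2m-2} \<union> {2m+1,2m+2,\<dots>}\<close>, or \<open>{0,2,\<dots>,2m,2m+1}\<close>: countably many sets.
  The finite ones among them have \<open>q\<close>-weight \<open>1\<close>, hence entropy \<open>log \<phi>\<close>, and as they
  contain the gap \<open>0\<close>, two blocks can always be joined by a word of length \<open>2 max S + 1\<close>:
  pad each block with at most \<open>max S\<close> zeros to make it bounded by ones and fill the rest
  with ones.
\<close>

section \<open>Words with prescribed gaps\<close>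

definition gaps_in :: "nat set \<Rightarrow> bool list \<Rightarrow> bool" where
  "gaps_in S w \<longleftrightarrow> (\<forall>i j. i < j \<longrightarrow> j < length w \<longrightarrow> w!i \<longrightarrow> w!j \<longrightarrow>
      (\<forall>k. i < k \<longrightarrow> k < j \<longrightarrow> \<not> w!k) \<longrightarrow> j - i - 1 \<in> S)"

lemma gaps_in_glue:
  assumes u: "gaps_in S (u @ [True])" and v: "gaps_in S (True # v)"
  shows "gaps_in S (u @ True # v)"
  unfolding gaps_in_def
proof (intro allI impI)
  fix i j
  assume ij: "i < j" and jl: "j < length (u @ True # v)" and wi: "(u @ True # v) ! i"
    and wj: "(u @ True # v) ! j" and btw: "\<forall>k. i < k \<longrightarrow> k < j \<longrightarrow> \<not> (u @ True # v) ! k"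
  let ?n = "length u"
  have left: "(u @ True # v) ! k = (u @ [True]) ! k" if "k \<le> ?n" for k
    using that by (cases "k < ?n") (auto simp: nth_append)
  have right: "(u @ True # v) ! k = (True # v) ! (k - ?n)" if "k \<ge> ?n" for k
    using that by (auto simp: nth_append)
  consider "j \<le> ?n" | "?n \<le> i" | "i < ?n" "?n < j" by linarith
  then show "j - i - 1 \<in> S"
  proof cases
    case 1
    then show ?thesis using u ij wi wj btw left unfolding gaps_in_def
      by (metis (no_types, lifting) le_trans less_imp_le_nat length_append_singleton less_Suc_eq_le)
  next
    case 2
    have "j - ?n - (i - ?n) - 1 \<in> S"
      using v unfolding gaps_in_def
    proof (elim allE impE)
      show "i - ?n < j - ?n" "j - ?n < length (True # v)" using ij jl 2 by auto
      show "(True # v) ! (i - ?n)" "(True # v) ! (j - ?n)" using wi wj right 2 ij by auto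
      show "\<forall>k>i - ?n. k < j - ?n \<longrightarrow> \<not> (True # v) ! k"
      proof (intro allI impI)
        fix k assume "i - ?n < k" "k < j - ?n"
        then have "\<not> (u @ True # v) ! (k + ?n)" using btw 2 by auto
        then show "\<not> (True # v) ! k" using right[of "k + ?n"] by simp
      qed
    qed
    then show ?thesis using 2 ij by simp
  next
    case 3
    then show ?thesis using btw[rule_format, of ?n] by simp
  qed
qed

lemma gaps_in_appendD1: "gaps_in S (u @ v) \<Longrightarrow> gaps_in S u"
  unfolding gaps_in_def
proof (intro allI impI)
  fix i j
  assume uv: "\<forall>i j. i < j \<longrightarrow> j < length (u @ v) \<longrightarrow> (u @ v) ! i \<longrightarrow> (u @ v) ! j \<longrightarrow>
      (\<forall>k. i < k \<longrightarrow> k < j \<longrightarrow> \<not> (u @ v) ! k) \<longrightarrow> j - i - 1 \<in> S"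
    and ij: "i < j" "j < length u" "u ! i" "u ! j" and btw: "\<forall>k. i < k \<longrightarrow> k < j \<longrightarrow> \<not> u ! k"
  have "\<forall>k. i < k \<longrightarrow> k < j \<longrightarrow> \<not> (u @ v) ! k" using btw ij by (auto simp: nth_append)
  then show "j - i - 1 \<in> S" using uv[rule_format, of i j] ij by (auto simp: nth_append)
qed

lemma gaps_in_appendD2: "gaps_in S (u @ v) \<Longrightarrow> gaps_in S v"
  unfolding gaps_in_def
proof (intro allI impI)
  fix i j
  assume uv: "\<forall>i j. i < j \<longrightarrow> j < length (u @ v) \<longrightarrow> (u @ v) ! i \<longrightarrow> (u @ v) ! j \<longrightarrow>
      (\<forall>k. i < k \<longrightarrow> k < j \<longrightarrow> \<not> (u @ v) ! k) \<longrightarrow> j - i - 1 \<in> S"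
    and ij: "i < j" "j < length v" "v ! i" "v ! j" and btw: "\<forall>k. i < k \<longrightarrow> k < j \<longrightarrow> \<not> v ! k"
  have "\<forall>k. i + length u < k \<longrightarrow> k < j + length u \<longrightarrow> \<not> (u @ v) ! k"
    using btw by (auto simp: nth_append dest!: spec[of _ "_ - length u"])
  then have "(j + length u) - (i + length u) - 1 \<in> S"
    using uv[rule_format, of "i + length u" "j + length u"] ij by (auto simp: nth_append)
  then show "j - i - 1 \<in> S" by simp
qed

lemma gaps_in_single_gap:
  assumes "s \<in> S"
  shows "gaps_in S (True # replicate s False @ [True])"
  unfolding gaps_in_def
proof (intro allI impI)
  fix i j
  let ?w = "True # replicate s False @ [True]"
  assume "i < j" "j < length ?w" "?w ! i" "?w ! j"
  moreover have "?w ! k \<longleftrightarrow> k = 0 \<or> k = s + 1" if "k < length ?w" for k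
    using that by (auto simp: nth_Cons' nth_append)
  ultimately show "j - i - 1 \<in> S" using assms by fastforce
qed

lemma gaps_in_first_gap:
  assumes "gaps_in S (True # replicate s False @ True # w)"
  shows "s \<in> S"
proof -
  let ?w = "True # replicate s False @ True # w"
  have "\<forall>k. 0 < k \<longrightarrow> k < s + 1 \<longrightarrow> \<not> ?w ! k" by (auto simp: nth_Cons' nth_append)
  then have "s + 1 - 0 - 1 \<in> S"
    using assms[unfolded gaps_in_def, rule_format, of 0 "s + 1"] by (auto simp: nth_append)
  then show ?thesis by simp
qed

lemma gaps_in_Cons_ones:
  assumes "0 \<in> S" "gaps_in S (True # w)"
  shows "gaps_in S (True # replicate j True @ w)"
proof (induction j)
  case 0
  then show ?case using assms(2) by simp
next
  case (Suc j)
  have "gaps_in S ([True] @ True # (replicate j True @ w))"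
    by (rule gaps_in_glue) (use gaps_in_single_gap[OF assms(1)] Suc in auto)
  then show ?case by simp
qed

lemma split_first_True: "True \<in> set u \<Longrightarrow> \<exists>a r. u = replicate a False @ True # r"
proof (induction u)
  case (Cons x xs)
  show ?case
  proof (cases x)
    case False
    then obtain a r where "xs = replicate a False @ True # r" using Cons by auto
    then show ?thesis using False by (intro exI[of _ "Suc a"]) auto
  qed (auto intro: exI[of _ 0])
qed simp

lemma split_last_True: "True \<in> set u \<Longrightarrow> \<exists>y b. u = y @ True # replicate b False"
proof -
  assume "True \<in> set u"
  then obtain a r where "rev u = replicate a False @ True # r"
    using split_first_True[of "rev u"] by auto
  then have "u = rev r @ True # replicate a False"
    by (metis append.assoc append_Cons append_Nil rev.simps(2) rev_append rev_replicate rev_rev_ident)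
  then show ?thesis by blast
qed

lemma replicate_False_if_True_notin: "True \<notin> set u \<Longrightarrow> u = replicate (length u) False"
  by (metis (full_types) replicate_length_same)

lemma replicate_False_Cons_True_inject:
  "replicate s False @ True # w = replicate s' False @ True # w' \<Longrightarrow> s = s' \<and> w = w'"
proof (induction s arbitrary: s')
  case 0 then show ?case by (cases s') auto
next
  case (Suc s) then show ?case by (cases s') auto
qed

section \<open>Periodic points and blocks\<close>

lemma gap_shift_zero_runs_if_recurrent:
  assumes gaps: "\<forall>i j. i < j \<and> x i \<and> x j \<and> (\<forall>k. i < k \<and> k < j \<longrightarrow> \<not> x k) \<longrightarrow> nat (j - i - 1) \<in> S"
    and up: "\<forall>i. \<exists>j\<ge>i. x j" and down: "\<forall>i. \<exists>j\<le>i. x j"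
  shows "\<forall>i (k::nat). (\<forall>m<k. \<not> x (i + int m)) \<longrightarrow> (\<exists>s\<in>S. k \<le> s)"
proof (intro allI impI)
  fix i :: int and k :: nat
  assume run: "\<forall>m<k. \<not> x (i + int m)"
  obtain j1 where j1: "j1 \<le> i - 1" "x j1" using down by blast
  obtain j2 where j2: "j2 \<ge> i" "x j2" using up by blast
  have ex_before: "\<exists>d::nat. x (i - 1 - int d)" using j1 by (intro exI[of _ "nat (i - 1 - j1)"]) simp
  have ex_after: "\<exists>d::nat. x (i + int d)" using j2 by (intro exI[of _ "nat (j2 - i)"]) simp
  define da where "da = (LEAST d::nat. x (i - 1 - int d))"
  define db where "db = (LEAST d::nat. x (i + int d))"
  have xa: "x (i - 1 - int da)" unfolding da_def using LeastI_ex[OF ex_before] .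
  have xb: "x (i + int db)" unfolding db_def using LeastI_ex[OF ex_after] .
  have na: "\<not> x (i - 1 - int d)" if "d < da" for d
    using not_less_Least[of d] that unfolding da_def by blast
  have nb: "\<not> x (i + int d)" if "d < db" for d
    using not_less_Least[of d] that unfolding db_def by blast
  have "\<forall>t. i - 1 - int da < t \<and> t < i + int db \<longrightarrow> \<not> x t"
  proof (intro allI impI)
    fix t assume t: "i - 1 - int da < t \<and> t < i + int db"
    show "\<not> x t"
      using na[of "nat (i - 1 - t)"] nb[of "nat (t - i)"] t by (cases "t < i") auto
  qed
  then have "nat ((i + int db) - (i - 1 - int da) - 1) \<in> S"
    using gaps[rule_format, of "i - 1 - int da" "i + int db"] xa xb by auto
  moreover have "k \<le> db" using run xb by (metis not_le_imp_less)
  ultimately show "\<exists>s\<in>S. k \<le> s" by (intro bexI) auto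
qed

definition periodic_point :: "bool list \<Rightarrow> int \<Rightarrow> bool" where
  "periodic_point z i = z ! nat (i mod int (length z))"

lemma periodic_point_nth: "m < length z \<Longrightarrow> periodic_point z (int m) = z ! m"
  unfolding periodic_point_def by (simp add: nat_mod_distrib)

lemma periodic_point_period:
  "z \<noteq> [] \<Longrightarrow> 0 \<le> k \<Longrightarrow> k < int (length z) \<Longrightarrow> periodic_point z (int (length z) * q + k) = z ! nat k"
  unfolding periodic_point_def by simp

lemma periodic_point_multiple:
  assumes "z \<noteq> []" "z ! 0"
  shows "periodic_point z (int (length z) * q)"
  using periodic_point_period[OF assms(1), of 0 q] assms by simp

lemma periodic_point_gaps:
  assumes ne: "z \<noteq> []" and z0: "z ! 0" and gaps: "gaps_in S (z @ [True])"
  shows "\<forall>i j. i < j \<and> periodic_point z i \<and> periodic_point z j \<and>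
      (\<forall>k. i < k \<and> k < j \<longrightarrow> \<not> periodic_point z k) \<longrightarrow> nat (j - i - 1) \<in> S"
proof (intro allI impI)
  let ?L = "int (length z)"
  let ?x = "periodic_point z"
  fix i j assume H: "i < j \<and> ?x i \<and> ?x j \<and> (\<forall>k. i < k \<and> k < j \<longrightarrow> \<not> ?x k)"
  have L_pos: "?L > 0" using ne by simp
  define q where "q = i div ?L"
  define a where "a = i mod ?L"
  have ia: "i = ?L * q + a" unfolding q_def a_def by simp
  have a: "0 \<le> a" "a < ?L" unfolding a_def using L_pos by auto
  have next_one: "?x (?L * q + ?L)"
    using periodic_point_multiple[OF ne z0, of "q + 1"] by (simp add: algebra_simps)
  have "j \<le> ?L * q + ?L"
  proof (rule ccontr)
    assume "\<not> ?thesis"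
    then show False using H ia a next_one by auto
  qed
  define d where "d = j - ?L * q"
  have d: "a < d" "d \<le> ?L" using \<open>j \<le> ?L * q + ?L\<close> H ia unfolding d_def by auto
  let ?Z = "z @ [True]"
  have Z_nth: "?Z ! nat k = ?x (?L * q + k)" if "0 \<le> k" "k \<le> ?L" for k
  proof (cases "k = ?L")
    case True
    then show ?thesis using next_one by (simp add: nth_append)
  next
    case False
    then have "nat k < length z" using that by (simp add: nat_less_iff)
    then show ?thesis using periodic_point_period[OF ne, of k q] that False by (simp add: nth_append)
  qed
  have "nat d - nat a - 1 \<in> S"
    using gaps unfolding gaps_in_def
  proof (elim allE impE)
    show "nat a < nat d" "nat d < length ?Z" using d a by auto
    show "?Z ! nat a" "?Z ! nat d" using Z_nth[of a] Z_nth[of d] a d H ia unfolding d_def by auto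
    show "\<forall>k>nat a. k < nat d \<longrightarrow> \<not> ?Z ! k"
    proof (intro allI impI)
      fix k assume k: "nat a < k" "k < nat d"
      then have "i < ?L * q + int k" "?L * q + int k < j" using ia d a unfolding d_def by auto
      then have "\<not> ?x (?L * q + int k)" using H by blast
      then show "\<not> ?Z ! k" using Z_nth[of "int k"] k d by simp
    qed
  qed
  moreover have "nat (j - i - 1) = nat d - nat a - 1" using ia d a unfolding d_def by simp
  ultimately show "nat (j - i - 1) \<in> S" by simp
qed

lemma periodic_point_recurrent:
  assumes ne: "z \<noteq> []" and z0: "z ! 0"
  shows "\<forall>i. \<exists>j\<ge>i. periodic_point z j" "\<forall>i. \<exists>j\<le>i. periodic_point z j"
proof -
  let ?L = "int (length z)"
  have L_pos: "?L > 0" using ne by simp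
  have i_eq: "i = ?L * (i div ?L) + i mod ?L" for i by simp
  show "\<forall>i. \<exists>j\<ge>i. periodic_point z j"
  proof
    fix i
    have "i < ?L * (i div ?L) + ?L" using i_eq[of i] pos_mod_bound[OF L_pos, of i] by linarith
    then have "i \<le> ?L * (i div ?L + 1)" by (simp add: algebra_simps)
    then show "\<exists>j\<ge>i. periodic_point z j" using periodic_point_multiple[OF ne z0] by blast
  qed
  show "\<forall>i. \<exists>j\<le>i. periodic_point z j"
  proof
    fix i
    have "?L * (i div ?L) \<le> i" using i_eq[of i] pos_mod_sign[OF L_pos, of i] by linarith
    then show "\<exists>j\<le>i. periodic_point z j" using periodic_point_multiple[OF ne z0] by blast
  qed
qed

lemma periodic_point_in_gap_shift:
  assumes "z \<noteq> []" "z ! 0" "gaps_in S (z @ [True])"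
  shows "periodic_point z \<in> gap_shift S"
  using periodic_point_gaps[OF assms]
    gap_shift_zero_runs_if_recurrent[OF periodic_point_gaps[OF assms] periodic_point_recurrent[OF assms(1,2)]]
  unfolding gap_shift_def by blast

lemma infix_in_blocks:
  assumes "x \<in> X" "\<forall>m < length z. x (int m) = z ! m" "z = pre @ y @ post"
  shows "y \<in> blocks X (length y)"
proof -
  have "\<forall>m<length y. y!m = x (int (length pre) + int m)"
  proof (intro allI impI)
    fix m assume m: "m < length y"
    have "x (int (length pre + m)) = z ! (length pre + m)"
      using assms(2)[rule_format, of "length pre + m"] m assms(3) by simp
    then show "y!m = x (int (length pre) + int m)" using assms(3) m by (simp add: nth_append)
  qed
  then show ?thesis unfolding blocks_def using assms(1) by blast
qed

lemma infix_in_blocks_gap_shift: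
  assumes "z \<noteq> []" "z ! 0" "gaps_in S (z @ [True])" "z = pre @ y @ post"
  shows "y \<in> blocks (gap_shift S) (length y)"
  using infix_in_blocks[OF periodic_point_in_gap_shift[OF assms(1-3)] _ assms(4)]
  by (simp add: periodic_point_nth)

lemma blocks_gap_shiftD:
  assumes "w \<in> blocks (gap_shift S) n"
  shows "length w = n" "gaps_in S w"
    and "\<And>i k. i + k \<le> n \<Longrightarrow> \<forall>m<k. \<not> w!(i+m) \<Longrightarrow> \<exists>s\<in>S. k \<le> s"
proof -
  obtain x i0 where x: "x \<in> gap_shift S" and wl: "length w = n"
    and wx: "\<forall>m<n. w ! m = x (i0 + int m)"
    using assms unfolding blocks_def by blast
  have x_gaps: "\<forall>i j. i < j \<and> x i \<and> x j \<and> (\<forall>k. i < k \<and> k < j \<longrightarrow> \<not> x k) \<longrightarrow> nat (j - i - 1) \<in> S"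
    and x_runs: "\<forall>i (k::nat). (\<forall>m<k. \<not> x (i + int m)) \<longrightarrow> (\<exists>s\<in>S. k \<le> s)"
    using x unfolding gap_shift_def by blast+
  show "length w = n" by (fact wl)
  show "gaps_in S w" unfolding gaps_in_def
  proof (intro allI impI)
    fix i j assume ij: "i < j" "j < length w" "w ! i" "w ! j"
      and btw: "\<forall>k. i < k \<longrightarrow> k < j \<longrightarrow> \<not> w ! k"
    have "\<forall>k. i0 + int i < k \<and> k < i0 + int j \<longrightarrow> \<not> x k"
    proof (intro allI impI)
      fix k assume k: "i0 + int i < k \<and> k < i0 + int j"
      then have "\<not> w ! nat (k - i0)" "nat (k - i0) < n" using btw ij wl by auto
      then show "\<not> x k" using wx[rule_format, of "nat (k - i0)"] k by auto
    qed
    then have "nat ((i0 + int j) - (i0 + int i) - 1) \<in> S"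
      using x_gaps[rule_format, of "i0 + int i" "i0 + int j"] ij wx wl by auto
    then show "j - i - 1 \<in> S" using ij by (simp add: nat_diff_distrib)
  qed
  fix i k assume "i + k \<le> n" "\<forall>m<k. \<not> w!(i+m)"
  then have "\<forall>m<k. \<not> x ((i0 + int i) + int m)" using wx by (auto simp: algebra_simps)
  then show "\<exists>s\<in>S. k \<le> s" using x_runs by blast
qed

lemma gap_shift_mono: "F \<subseteq> S \<Longrightarrow> gap_shift F \<subseteq> gap_shift S"
  unfolding gap_shift_def by blast

lemma blocks_mono: "X \<subseteq> Y \<Longrightarrow> blocks X n \<subseteq> blocks Y n"
  unfolding blocks_def by blast

lemma blocks_subset_language: "blocks X n \<subseteq> language X"
  unfolding language_def by blast

lemma finite_blocks: "finite (blocks X n)"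
proof -
  have "blocks X n \<subseteq> {xs. set xs \<subseteq> UNIV \<and> length xs = n}" unfolding blocks_def by auto
  then show ?thesis using finite_lists_length_eq[of "UNIV::bool set"] finite_subset by auto
qed

lemma gap_in_if_gap_shift_subset:
  assumes "s \<in> S" "gap_shift S \<subseteq> gap_shift S'"
  shows "s \<in> S'"
proof -
  let ?z = "True # replicate s False @ True # replicate s False"
  have "gaps_in S ((True # replicate s False) @ True # (replicate s False @ [True]))"
    by (rule gaps_in_glue) (use gaps_in_single_gap[OF assms(1)] in auto)
  then have "True # replicate s False @ [True] \<in> blocks (gap_shift S) (length (True # replicate s False @ [True]))"
    by (intro infix_in_blocks_gap_shift[of ?z S "[]" _ "replicate s False"]) simp_all
  then have "True # replicate s False @ [True] \<in> blocks (gap_shift S) (s + 2)" by simp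
  then have "True # replicate s False @ [True] \<in> blocks (gap_shift S') (s + 2)"
    using blocks_mono[OF assms(2)] by blast
  then show ?thesis using blocks_gap_shiftD(2) gaps_in_first_gap[of S' s "[]"] by blast
qed

lemma inj_gap_shift: "inj gap_shift"
proof (rule injI)
  fix S S' assume "gap_shift S = gap_shift S'"
  then show "S = S'" using gap_in_if_gap_shift_subset by (metis equalityI subsetI)
qed

section \<open>Counting blocks\<close>

lemma card_le_Suc_sum_if_subset_insert_UN:
  assumes A: "A \<subseteq> insert a (\<Union>i\<in>I. f i ` B i)" and I: "finite I"
    and B: "\<And>i. i \<in> I \<Longrightarrow> finite (B i)"
  shows "real (card A) \<le> 1 + (\<Sum>i\<in>I. real (card (B i)))"
proof -
  let ?U = "\<Union>i\<in>I. f i ` B i"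
  have fin: "finite ?U" using I B by blast
  have "card A \<le> card (insert a ?U)" by (rule card_mono) (use A fin in auto)
  also have "\<dots> \<le> Suc (card ?U)" using fin by (simp add: card_insert_if)
  also have "card ?U \<le> (\<Sum>i\<in>I. card (f i ` B i))" by (rule card_UN_le[OF I])
  also have "\<dots> \<le> (\<Sum>i\<in>I. card (B i))" by (intro sum_mono card_image_le B)
  finally show ?thesis by (simp add: of_nat_sum[symmetric] del: of_nat_sum)
qed

lemma power_diff_Suc_eq:
  fixes \<rho> :: real
  assumes "\<rho> > 0" "s < k"
  shows "\<rho> ^ (k - s - 1) = \<rho> ^ k * (1/\<rho>) ^ (s + 1)"
proof -
  have "\<rho> ^ k = \<rho> ^ (k - s - 1) * \<rho> ^ (s + 1)"
    using assms(2) by (simp add: power_add[symmetric] del: power_Suc)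
  then show ?thesis using assms(1) by (simp add: field_simps)
qed

definition gap_tails :: "nat set \<Rightarrow> nat \<Rightarrow> bool list set" where
  "gap_tails S k = {w. length w = k \<and> gaps_in S (True # w)}"

lemma finite_gap_tails: "finite (gap_tails S k)"
proof -
  have "gap_tails S k \<subseteq> {xs. set xs \<subseteq> UNIV \<and> length xs = k}" unfolding gap_tails_def by auto
  then show ?thesis using finite_lists_length_eq[of "UNIV::bool set"] finite_subset by auto
qed

lemma gaps_in_cases:
  assumes "gaps_in S w"
  obtains "w = replicate (length w) False"
  | a w' where "a < length w" "w = replicate a False @ True # w'"
      "w' \<in> gap_tails S (length w - a - 1)"
proof (cases "True \<in> set w")
  case False
  then show ?thesis using replicate_False_if_True_notin that(1) by blast
next
  case True
  then obtain a w' where w: "w = replicate a False @ True # w'" using split_first_True by blast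
  then have "gaps_in S (True # w')" using gaps_in_appendD2 assms by blast
  then show ?thesis using that(2)[OF _ w] w unfolding gap_tails_def by simp
qed

lemma gap_tails_subset:
  "gap_tails S k \<subseteq> insert (replicate k False)
     (\<Union>s\<in>S \<inter> {..<k}. (\<lambda>w'. replicate s False @ True # w') ` gap_tails S (k - s - 1))"
proof
  fix w assume w: "w \<in> gap_tails S k"
  then have "gaps_in S w" using gaps_in_appendD2[of S "[True]"] unfolding gap_tails_def by simp
  then show "w \<in> insert (replicate k False)
     (\<Union>s\<in>S \<inter> {..<k}. (\<lambda>w'. replicate s False @ True # w') ` gap_tails S (k - s - 1))"
  proof (cases rule: gaps_in_cases)
    case (2 s w')
    then have "s \<in> S" using w gaps_in_first_gap unfolding gap_tails_def by auto
    moreover have "length w = k" using w unfolding gap_tails_def by simp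
    ultimately show ?thesis using 2 by blast
  qed (use w gap_tails_def in auto)
qed

lemma blocks_gap_shift_subset:
  "blocks (gap_shift S) n \<subseteq> insert (replicate n False)
     (\<Union>a\<in>{..<n}. (\<lambda>w'. replicate a False @ True # w') ` gap_tails S (n - a - 1))"
proof
  fix w assume "w \<in> blocks (gap_shift S) n"
  then have "gaps_in S w" "length w = n" using blocks_gap_shiftD by blast+
  then show "w \<in> insert (replicate n False)
     (\<Union>a\<in>{..<n}. (\<lambda>w'. replicate a False @ True # w') ` gap_tails S (n - a - 1))"
    by (cases rule: gaps_in_cases) auto
qed

lemma card_gap_tails_le:
  assumes \<rho>: "1 \<le> \<rho>" and weights: "\<forall>K. (\<Sum>s\<in>S\<inter>{..<K}. (1/\<rho>)^(s+1)) \<le> 1"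
  shows "real (card (gap_tails S k)) \<le> (real k + 1) * \<rho> ^ k"
proof (induction k rule: less_induct)
  case (less k)
  let ?I = "S \<inter> {..<k}"
  have split: "real (card (gap_tails S k)) \<le> 1 + (\<Sum>s\<in>?I. real (card (gap_tails S (k - s - 1))))"
    by (rule card_le_Suc_sum_if_subset_insert_UN[OF gap_tails_subset]) (auto intro: finite_gap_tails)
  have "(\<Sum>s\<in>?I. real (card (gap_tails S (k - s - 1)))) \<le> (\<Sum>s\<in>?I. k * \<rho>^k * (1/\<rho>)^(s+1))"
  proof (rule sum_mono)
    fix s assume "s \<in> ?I"
    then have sk: "s < k" by simp
    have "real (card (gap_tails S (k - s - 1))) \<le> (real (k - s - 1) + 1) * \<rho> ^ (k - s - 1)"
      using less[of "k - s - 1"] sk by simp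
    also have "\<dots> \<le> k * \<rho> ^ (k - s - 1)"
      using sk \<rho> by (intro mult_right_mono) auto
    also have "\<dots> = k * \<rho>^k * (1/\<rho>)^(s+1)" using power_diff_Suc_eq[of \<rho> s k] \<rho> sk by simp
    finally show "real (card (gap_tails S (k - s - 1))) \<le> k * \<rho>^k * (1/\<rho>)^(s+1)" .
  qed
  also have "\<dots> = k * \<rho>^k * (\<Sum>s\<in>?I. (1/\<rho>)^(s+1))" by (simp add: sum_distrib_left)
  also have "\<dots> \<le> k * \<rho>^k" using weights \<rho> by (intro mult_left_le) auto
  finally show ?case using split one_le_power[OF \<rho>, of k] by (simp add: algebra_simps)
qed

lemma card_blocks_gap_shift_le:
  assumes \<rho>: "1 \<le> \<rho>" and weights: "\<forall>K. (\<Sum>s\<in>S\<inter>{..<K}. (1/\<rho>)^(s+1)) \<le> 1"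
  shows "real (card (blocks (gap_shift S) n)) \<le> (real n + 1)^2 * \<rho> ^ n"
proof -
  have split: "real (card (blocks (gap_shift S) n)) \<le> 1 + (\<Sum>a<n. real (card (gap_tails S (n - a - 1))))"
    by (rule card_le_Suc_sum_if_subset_insert_UN[OF blocks_gap_shift_subset])
      (auto intro: finite_gap_tails)
  have "(\<Sum>a<n. real (card (gap_tails S (n - a - 1)))) \<le> (\<Sum>a<n. n * \<rho>^n)"
  proof (rule sum_mono)
    fix a assume "a \<in> {..<n}"
    then have "a < n" by simp
    have "real (card (gap_tails S (n - a - 1))) \<le> (real (n - a - 1) + 1) * \<rho> ^ (n - a - 1)"
      using card_gap_tails_le[OF \<rho> weights, of "n - a - 1"] \<open>a < n\<close> by simp
    also have "\<dots> \<le> n * \<rho> ^ n"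
      using \<open>a < n\<close> \<rho> by (intro mult_mono power_increasing) auto
    finally show "real (card (gap_tails S (n - a - 1))) \<le> n * \<rho>^n" .
  qed
  also have "\<dots> = real n * real n * \<rho>^n" by simp
  also have "\<dots> \<le> (real n + 1)^2 * \<rho>^n - 1"
  proof -
    have "1 \<le> \<rho>^n" "0 \<le> real n * (2 * \<rho>^n)" using one_le_power[OF \<rho>] \<rho> by auto
    moreover have "(real n + 1)^2 * \<rho>^n - 1 = real n * real n * \<rho>^n + (\<rho>^n - 1) + real n * (2 * \<rho>^n)"
      by (simp add: power2_eq_square algebra_simps)
    ultimately show ?thesis by linarith
  qed
  finally show ?thesis using split by simp
qed

definition closable_words :: "nat set \<Rightarrow> nat \<Rightarrow> bool list set" where
  "closable_words F k = {w. length w = k \<and> (\<exists>j. gaps_in F (True # w @ replicate j False @ [True]))}"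

lemma finite_closable_words: "finite (closable_words F k)"
proof -
  have "closable_words F k \<subseteq> {xs. set xs \<subseteq> UNIV \<and> length xs = k}"
    unfolding closable_words_def by auto
  then show ?thesis using finite_lists_length_eq[of "UNIV::bool set"] finite_subset by auto
qed

lemma replicate_False_in_closable_words:
  assumes "M \<in> F" "k \<le> M"
  shows "replicate k False \<in> closable_words F k"
proof -
  have "replicate k False @ replicate (M - k) False = replicate M False"
    using assms(2) by (simp flip: replicate_add)
  then have "gaps_in F (True # (replicate k False @ replicate (M - k) False) @ [True])"
    using gaps_in_single_gap[OF assms(1)] by simp
  then show ?thesis unfolding closable_words_def by (auto intro!: exI[of _ "M - k"])
qed

lemma sum_card_closable_words_le:
  assumes F: "finite F" and k: "Max F < k"
  shows "(\<Sum>s\<in>F. card (closable_words F (k - s - 1))) \<le> card (closable_words F k)"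
proof -
  define h where "h = (\<lambda>p. replicate (fst p) False @ True # snd p)"
  let ?Sig = "Sigma F (\<lambda>s. closable_words F (k - s - 1))"
  have "h ` ?Sig \<subseteq> closable_words F k"
  proof
    fix y assume "y \<in> h ` ?Sig"
    then obtain s w where s: "s \<in> F" and w: "w \<in> closable_words F (k - s - 1)"
      and y: "y = replicate s False @ True # w" unfolding h_def by auto
    obtain j where j: "gaps_in F (True # w @ replicate j False @ [True])" and wl: "length w = k - s - 1"
      using w unfolding closable_words_def by auto
    have "gaps_in F ((True # replicate s False) @ True # (w @ replicate j False @ [True]))"
      by (rule gaps_in_glue) (use gaps_in_single_gap[OF s] j in auto)
    moreover have "s < k" using Max_ge[OF F s] k by simp
    ultimately show "y \<in> closable_words F k" unfolding closable_words_def using y wl by auto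
  qed
  moreover have "inj_on h ?Sig"
  proof (rule inj_onI)
    fix p p' assume "h p = h p'"
    then have "fst p = fst p' \<and> snd p = snd p'"
      using replicate_False_Cons_True_inject unfolding h_def by blast
    then show "p = p'" by (simp add: prod_eq_iff)
  qed
  ultimately have "card ?Sig \<le> card (closable_words F k)"
    by (intro card_inj_on_le finite_closable_words)
  moreover have "card ?Sig = (\<Sum>s\<in>F. card (closable_words F (k - s - 1)))"
    by (rule card_SigmaI) (use F finite_closable_words in auto)
  ultimately show ?thesis by simp
qed

lemma card_closable_words_ge:
  assumes F: "finite F" "F \<noteq> {}" and r: "1 \<le> r" and weights: "1 \<le> (\<Sum>s\<in>F. (1/r)^(s+1))"
  shows "r ^ k / r ^ Max F \<le> real (card (closable_words F k))"
proof (induction k rule: less_induct)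
  case (less k)
  let ?M = "Max F"
  show ?case
  proof (cases "k \<le> ?M")
    case True
    then have "closable_words F k \<noteq> {}"
      using replicate_False_in_closable_words[OF Max_in[OF F]] by blast
    then have "1 \<le> card (closable_words F k)"
      using finite_closable_words by (simp add: Suc_le_eq card_gt_0_iff)
    moreover have "r ^ k / r ^ ?M \<le> 1" using r True by (simp add: power_increasing)
    ultimately show ?thesis by simp
  next
    case False
    have "r ^ k / r ^ ?M \<le> r ^ k / r ^ ?M * (\<Sum>s\<in>F. (1/r)^(s+1))"
      using mult_left_mono[OF weights, of "r ^ k / r ^ ?M"] r by simp
    also have "\<dots> = (\<Sum>s\<in>F. r ^ (k - s - 1) / r ^ ?M)"
      unfolding sum_distrib_left
    proof (rule sum.cong)
      fix s assume "s \<in> F"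
      then have "s < k" using Max_ge[OF F(1)] False by fastforce
      then show "r ^ k / r ^ ?M * (1/r)^(s+1) = r ^ (k - s - 1) / r ^ ?M"
        using power_diff_Suc_eq[of r s k] r by simp
    qed simp
    also have "\<dots> \<le> (\<Sum>s\<in>F. real (card (closable_words F (k - s - 1))))"
      using less Max_ge[OF F(1)] False by (intro sum_mono) simp
    also have "\<dots> \<le> real (card (closable_words F k))"
      using sum_card_closable_words_le[OF F(1)] False by (simp flip: of_nat_sum)
    finally show ?thesis .
  qed
qed

lemma Cons_True_closable_words_subset: "Cons True ` closable_words F k \<subseteq> blocks (gap_shift F) (Suc k)"
proof
  fix y assume "y \<in> Cons True ` closable_words F k"
  then obtain w j where y: "y = True # w" and wl: "length w = k"
    and j: "gaps_in F (True # w @ replicate j False @ [True])"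
    unfolding closable_words_def by auto
  have "y \<in> blocks (gap_shift F) (length y)"
    by (rule infix_in_blocks_gap_shift[of "True # w @ replicate j False" F "[]" y "replicate j False"])
      (use j y in auto)
  then show "y \<in> blocks (gap_shift F) (Suc k)" using y wl by simp
qed

lemma card_blocks_gap_shift_ge:
  assumes F: "finite F" "F \<noteq> {}" "F \<subseteq> S" and r: "1 \<le> r"
    and weights: "1 \<le> (\<Sum>s\<in>F. (1/r)^(s+1))" and n: "1 \<le> n"
  shows "r ^ n / r ^ (Max F + 1) \<le> real (card (blocks (gap_shift S) n))"
proof -
  obtain k where k: "n = Suc k" using n by (cases n) auto
  have "card (closable_words F k) = card (Cons True ` closable_words F k)" by (simp add: card_image)
  also have "\<dots> \<le> card (blocks (gap_shift S) n)"
    using Cons_True_closable_words_subset blocks_mono[OF gap_shift_mono[OF F(3)]] k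
    by (intro card_mono[OF finite_blocks]) blast
  finally have "r ^ k / r ^ Max F \<le> real (card (blocks (gap_shift S) n))"
    using card_closable_words_ge[OF F(1,2) r weights, of k] by linarith
  then show ?thesis using r k by simp
qed

section \<open>Entropy from growth bounds\<close>

lemma LIMSEQ_growth_bounds:
  "(\<lambda>n. a / real n + b) \<longlonglongrightarrow> b" "(\<lambda>n. 2 * (log 2 (real n + 1) / real n) + b) \<longlonglongrightarrow> b"
  by real_asymp+

lemma log_card_div_ge:
  assumes c: "0 < c" and r: "1 \<le> r" and n: "1 \<le> n" and card: "c * r ^ n \<le> real (card A)"
  shows "log 2 c / real n + log 2 r \<le> log 2 (real (card A)) / real n"
proof -
  have "log 2 c + real n * log 2 r = log 2 (c * r ^ n)"
    using c r by (simp add: log_mult_pos log_nat_power)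
  also have "\<dots> \<le> log 2 (real (card A))"
    using card c r by (intro log_mono) auto
  finally have "(log 2 c + real n * log 2 r) / real n \<le> log 2 (real (card A)) / real n"
    using n by (intro divide_right_mono) auto
  moreover have "(log 2 c + real n * log 2 r) / real n = log 2 c / real n + log 2 r"
    using n by (simp add: field_simps)
  ultimately show ?thesis by simp
qed

lemma log_card_div_le:
  assumes \<rho>: "1 \<le> \<rho>" and n: "1 \<le> n" and card: "real (card A) \<le> (real n + 1)^2 * \<rho> ^ n"
  shows "log 2 (real (card A)) / real n \<le> 2 * (log 2 (real n + 1) / real n) + log 2 \<rho>"
proof (cases "card A = 0")
  case True
  then show ?thesis using \<rho> by (simp add: log_def)
next
  case False
  have "log 2 (real (card A)) \<le> log 2 ((real n + 1)^2 * \<rho> ^ n)"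
    using card False \<rho> by (subst log_le_cancel_iff) auto
  also have "\<dots> = 2 * log 2 (real n + 1) + real n * log 2 \<rho>"
    using \<rho> by (simp add: log_mult_pos log_nat_power)
  finally have "log 2 (real (card A)) / real n \<le> (2 * log 2 (real n + 1) + real n * log 2 \<rho>) / real n"
    using n by (intro divide_right_mono) auto
  also have "\<dots> = 2 * (log 2 (real n + 1) / real n) + log 2 \<rho>"
    using n by (simp add: field_simps)
  finally show ?thesis .
qed

lemma has_entropy_ge:
  assumes h: "has_entropy X h" and c: "0 < c" and r: "1 \<le> r"
    and card: "\<forall>n\<ge>1. c * r ^ n \<le> real (card (blocks X n))"
  shows "log 2 r \<le> h"
proof (rule LIMSEQ_le)
  show "(\<lambda>n. log 2 c / real n + log 2 r) \<longlonglongrightarrow> log 2 r" by (rule LIMSEQ_growth_bounds)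
  show "(\<lambda>n. log 2 (real (card (blocks X n))) / real n) \<longlonglongrightarrow> h"
    using h unfolding has_entropy_def .
  show "\<exists>N. \<forall>n\<ge>N. log 2 c / real n + log 2 r \<le> log 2 (real (card (blocks X n))) / real n"
    using log_card_div_ge[OF c r] card by blast
qed

lemma has_entropy_le:
  assumes h: "has_entropy X h" and \<rho>: "1 \<le> \<rho>"
    and card: "\<forall>n. real (card (blocks X n)) \<le> (real n + 1)^2 * \<rho> ^ n"
  shows "h \<le> log 2 \<rho>"
proof (rule LIMSEQ_le)
  show "(\<lambda>n. log 2 (real (card (blocks X n))) / real n) \<longlonglongrightarrow> h"
    using h unfolding has_entropy_def .
  show "(\<lambda>n. 2 * (log 2 (real n + 1) / real n) + log 2 \<rho>) \<longlonglongrightarrow> log 2 \<rho>"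
    by (rule LIMSEQ_growth_bounds)
  show "\<exists>N. \<forall>n\<ge>N. log 2 (real (card (blocks X n))) / real n \<le> 2 * (log 2 (real n + 1) / real n) + log 2 \<rho>"
    using log_card_div_le[OF \<rho>] card by blast
qed

lemma has_entropyI:
  assumes c: "0 < c" and r: "1 \<le> r"
    and lower: "\<forall>n\<ge>1. c * r ^ n \<le> real (card (blocks X n))"
    and upper: "\<forall>n. real (card (blocks X n)) \<le> (real n + 1)^2 * r ^ n"
  shows "has_entropy X (log 2 r)"
  unfolding has_entropy_def
proof (rule tendsto_sandwich)
  show "(\<lambda>n. log 2 c / real n + log 2 r) \<longlonglongrightarrow> log 2 r" by (rule LIMSEQ_growth_bounds)
  show "(\<lambda>n. 2 * (log 2 (real n + 1) / real n) + log 2 r) \<longlonglongrightarrow> log 2 r"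
    by (rule LIMSEQ_growth_bounds)
  show "\<forall>\<^sub>F n in sequentially. log 2 c / real n + log 2 r \<le> log 2 (real (card (blocks X n))) / real n"
    using log_card_div_ge[OF c r] lower unfolding eventually_sequentially by blast
  show "\<forall>\<^sub>F n in sequentially.
      log 2 (real (card (blocks X n))) / real n \<le> 2 * (log 2 (real n + 1) / real n) + log 2 r"
    using log_card_div_le[OF r] upper unfolding eventually_sequentially by blast
qed

lemma gap_shift_entropy_le:
  assumes "has_entropy (gap_shift S) h" "1 \<le> \<rho>" "\<forall>K. (\<Sum>s\<in>S\<inter>{..<K}. (1/\<rho>)^(s+1)) \<le> 1"
  shows "h \<le> log 2 \<rho>"
  using has_entropy_le[OF assms(1,2)] card_blocks_gap_shift_le[OF assms(2,3)] by blast

lemma gap_shift_entropy_ge: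
  assumes h: "has_entropy (gap_shift S) h" and F: "finite F" "F \<noteq> {}" "F \<subseteq> S"
    and r: "1 \<le> r" and weights: "1 \<le> (\<Sum>s\<in>F. (1/r)^(s+1))"
  shows "log 2 r \<le> h"
proof (rule has_entropy_ge[OF h _ r])
  show "0 < 1 / r ^ (Max F + 1)" using r by simp
  show "\<forall>n\<ge>1. 1 / r ^ (Max F + 1) * r ^ n \<le> real (card (blocks (gap_shift S) n))"
    using card_blocks_gap_shift_ge[OF F r weights] by simp
qed

lemma has_entropy_finite_gap_shift:
  assumes F: "finite F" "F \<noteq> {}" and r: "1 \<le> r" and weights: "(\<Sum>s\<in>F. (1/r)^(s+1)) = 1"
  shows "has_entropy (gap_shift F) (log 2 r)"
proof (rule has_entropyI[of "1 / r ^ (Max F + 1)"])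
  show "\<forall>n\<ge>1. 1 / r ^ (Max F + 1) * r ^ n \<le> real (card (blocks (gap_shift F) n))"
    using card_blocks_gap_shift_ge[OF F order_refl r] weights by simp
  have "(\<Sum>s\<in>F \<inter> {..<K}. (1/r)^(s+1)) \<le> (\<Sum>s\<in>F. (1/r)^(s+1))" for K
    using F r by (intro sum_mono2) auto
  then have "\<forall>K. (\<Sum>s\<in>F \<inter> {..<K}. (1/r)^(s+1)) \<le> 1" using weights by simp
  then show "\<forall>n. real (card (blocks (gap_shift F) n)) \<le> (real n + 1)^2 * r ^ n"
    using card_blocks_gap_shift_le[OF r] by blast
qed (use r in auto)

section \<open>Sets of golden weight one\<close>

definition phi :: real where "phi = (1 + sqrt 5) / 2"

definition phi_inv :: real where "phi_inv = 1 / phi"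

lemma phi_gt_1: "1 < phi"
  unfolding phi_def using real_sqrt_gt_1_iff[of 5] by simp

lemma phi_inv_pos: "0 < phi_inv" and phi_inv_less_1: "phi_inv < 1"
  using phi_gt_1 unfolding phi_inv_def by auto

lemma phi_inv_add_square: "phi_inv + phi_inv^2 = 1"
proof -
  have "phi^2 = phi + 1"
    unfolding phi_def by (simp add: power2_eq_square field_simps)
  then show ?thesis
    using phi_gt_1 unfolding phi_inv_def by (simp add: field_simps power2_eq_square)
qed

definition golden_weight :: "nat set \<Rightarrow> nat \<Rightarrow> real" where
  "golden_weight S K = (\<Sum>s\<in>S \<inter> {..<K}. phi_inv ^ (s + 1))"

definition unit_golden_weight :: "nat set \<Rightarrow> bool" where
  "unit_golden_weight S \<longleftrightarrow> (\<forall>K. golden_weight S K \<le> 1) \<and> (\<forall>e>0. \<exists>K. 1 - e < golden_weight S K)"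

lemma golden_weight_mono: "K \<le> K' \<Longrightarrow> golden_weight S K \<le> golden_weight S K'"
  unfolding golden_weight_def by (rule sum_mono2) (auto simp: phi_inv_pos less_imp_le)

lemma geometric_sum_atLeastLessThan:
  fixes c :: real
  assumes "a \<le> K"
  shows "(1 - c) * (\<Sum>s\<in>{a..<K}. c ^ (s + 1)) = c ^ (a + 1) - c ^ (K + 1)"
  using assms
proof (induction K rule: dec_induct)
  case (step K)
  have e: "(\<Sum>s\<in>{a..<Suc K}. c^(s+1)) = (\<Sum>s\<in>{a..<K}. c^(s+1)) + c^(K+1)" using step(1) by simp
  show ?case unfolding e distrib_left step.IH by (simp add: algebra_simps)
qed simp

lemma golden_weight_atLeast_1_le: "(\<Sum>s\<in>{1..<K}. phi_inv ^ (s + 1)) \<le> 1 - phi_inv ^ (K + 1)"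
proof (cases "1 \<le> K")
  case True
  have "1 - phi_inv = phi_inv^2" using phi_inv_add_square by simp
  then have "phi_inv^2 * (\<Sum>s\<in>{1..<K}. phi_inv ^ (s + 1)) = phi_inv^(1 + 1) - phi_inv ^ (K + 1)"
    using geometric_sum_atLeastLessThan[OF True, of phi_inv] by simp
  also have "\<dots> = phi_inv^2 - phi_inv ^ (K + 1)" by (simp add: power2_eq_square)
  also have "\<dots> \<le> phi_inv^2 * (1 - phi_inv ^ (K + 1))"
    using phi_inv_pos phi_inv_less_1 mult_left_le[of "phi_inv^2" "phi_inv ^ (K + 1)"]
    by (simp add: algebra_simps power_le_one less_imp_le)
  finally show ?thesis using phi_inv_pos by (simp add: mult_le_cancel_left_pos)
next
  case False
  then have "K = 0" by simp
  then show ?thesis using phi_inv_less_1 by simp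
qed

definition gap_cons :: "nat set \<Rightarrow> nat set" where
  "gap_cons S = insert 0 ((\<lambda>s. s + 2) ` S)"

lemma gap_cons_iff: "x \<in> gap_cons S \<longleftrightarrow> x = 0 \<or> (2 \<le> x \<and> x - 2 \<in> S)"
  unfolding gap_cons_def by (auto simp: image_iff intro: bexI[of _ "x - 2"])

lemma gap_cons_unshift:
  assumes "0 \<in> S" "1 \<notin> S"
  shows "S = gap_cons {s. s + 2 \<in> S}"
  unfolding set_eq_iff gap_cons_iff mem_Collect_eq
proof
  fix x
  show "x \<in> S \<longleftrightarrow> x = 0 \<or> (2 \<le> x \<and> x - 2 + 2 \<in> S)"
  proof (cases "x < 2")
    case False
    then have "x - 2 + 2 = x" by simp
    then show ?thesis using False by auto
  qed (use assms in \<open>auto simp: less_2_cases_iff\<close>)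
qed

lemma golden_weight_gap_cons:
  "golden_weight (gap_cons S) (K + 2) = phi_inv + phi_inv^2 * golden_weight S K"
proof -
  have "gap_cons S \<inter> {..<K + 2} = insert 0 ((\<lambda>s. s + 2) ` (S \<inter> {..<K}))"
    unfolding gap_cons_def by auto
  then have "golden_weight (gap_cons S) (K + 2)
      = (\<Sum>s\<in>insert 0 ((\<lambda>s. s + 2) ` (S \<inter> {..<K})). phi_inv ^ (s + 1))"
    unfolding golden_weight_def by (simp only:)
  also have "\<dots> = phi_inv + (\<Sum>s\<in>(\<lambda>s. s + 2) ` (S \<inter> {..<K}). phi_inv ^ (s + 1))"
    by (subst sum.insert) auto
  also have "(\<Sum>s\<in>(\<lambda>s. s + 2) ` (S \<inter> {..<K}). phi_inv ^ (s + 1)) = (\<Sum>s\<in>S \<inter> {..<K}. phi_inv ^ (s + 2 + 1))"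
    by (subst sum.reindex) (auto simp: inj_on_def)
  also have "(\<Sum>s\<in>S \<inter> {..<K}. phi_inv ^ (s + 2 + 1)) = phi_inv^2 * golden_weight S K"
    unfolding golden_weight_def sum_distrib_left power_add[symmetric] by (simp add: add.commute)
  finally show ?thesis .
qed

lemma unit_golden_weight_gap_consD:
  assumes "unit_golden_weight (gap_cons S)"
  shows "unit_golden_weight S"
proof -
  have sq: "phi_inv^2 = 1 - phi_inv" "0 < phi_inv^2"
    using phi_inv_add_square phi_inv_pos by auto
  have "golden_weight S K \<le> 1" for K
  proof -
    have "phi_inv + phi_inv^2 * golden_weight S K \<le> 1"
      using assms golden_weight_gap_cons[of S K] unfolding unit_golden_weight_def by metis
    then have "phi_inv^2 * golden_weight S K \<le> phi_inv^2 * 1" using sq(1) by simp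
    then show ?thesis using sq(2) by (simp add: mult_le_cancel_left_pos)
  qed
  moreover have "\<exists>K. 1 - e < golden_weight S K" if e: "e > 0" for e
  proof -
    obtain K where K: "1 - e * phi_inv^2 < golden_weight (gap_cons S) K"
      using assms e sq unfolding unit_golden_weight_def by (meson mult_pos_pos)
    have "golden_weight (gap_cons S) K \<le> golden_weight (gap_cons S) (K + 2)"
      by (rule golden_weight_mono) simp
    then have "1 - e * phi_inv^2 < phi_inv + phi_inv^2 * golden_weight S K"
      using K golden_weight_gap_cons[of S K] by linarith
    moreover have "phi_inv^2 * (1 - e) = phi_inv^2 - e * phi_inv^2" by (simp add: algebra_simps)
    ultimately have "phi_inv^2 * (1 - e) < phi_inv^2 * golden_weight S K" using sq(1) by linarith
    then show ?thesis using sq by (meson mult_less_cancel_left_pos)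
  qed
  ultimately show ?thesis unfolding unit_golden_weight_def by blast
qed


lemma unit_golden_weight_0_notin:
  assumes S: "unit_golden_weight S" and "0 \<notin> S"
  shows "S = {s. 1 \<le> s}"
proof (rule ccontr)
  assume "S \<noteq> {s. 1 \<le> s}"
  moreover have "x \<in> S \<Longrightarrow> 1 \<le> x" for x using \<open>0 \<notin> S\<close> by (cases x) auto
  ultimately obtain s0 where s0: "1 \<le> s0" "s0 \<notin> S" by auto
  have S_sub: "S \<inter> {..<K} \<subseteq> {1..<K} - {s0}" for K using \<open>0 \<notin> S\<close> s0 by (auto simp: Suc_le_eq) (metis neq0_conv)
  have "golden_weight S K \<le> 1 - phi_inv ^ (s0 + 1)" for K
  proof (cases "s0 < K")
    case True
    have "golden_weight S K \<le> (\<Sum>s\<in>{1..<K} - {s0}. phi_inv ^ (s + 1))"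
      unfolding golden_weight_def by (rule sum_mono2[OF _ S_sub]) (auto simp: phi_inv_pos less_imp_le)
    also have "\<dots> = (\<Sum>s\<in>{1..<K}. phi_inv ^ (s + 1)) - phi_inv ^ (s0 + 1)"
      using True s0 by (subst sum_diff1) auto
    also have "\<dots> \<le> 1 - phi_inv ^ (s0 + 1)"
      using golden_weight_atLeast_1_le[of K] phi_inv_pos by (smt (verit) zero_le_power)
    finally show ?thesis .
  next
    case False
    have "golden_weight S K \<le> (\<Sum>s\<in>{1..<K}. phi_inv ^ (s + 1))"
      unfolding golden_weight_def using S_sub by (intro sum_mono2) (auto simp: phi_inv_pos less_imp_le)
    also have "\<dots> \<le> 1 - phi_inv ^ (K + 1)" by (rule golden_weight_atLeast_1_le)
    also have "\<dots> \<le> 1 - phi_inv ^ (s0 + 1)"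
      using False phi_inv_pos phi_inv_less_1 by (simp add: power_decreasing)
    finally show ?thesis .
  qed
  moreover obtain K where "1 - phi_inv ^ (s0 + 1) < golden_weight S K"
    using S phi_inv_pos unfolding unit_golden_weight_def by (meson zero_less_power)
  ultimately show False by (meson not_le)
qed

lemma unit_golden_weight_0_1_in:
  assumes S: "unit_golden_weight S" and "0 \<in> S" "1 \<in> S"
  shows "S = {0, 1}"
proof (rule ccontr)
  assume "S \<noteq> {0, 1}"
  then obtain s0 where "s0 \<in> S" "s0 \<notin> {0, 1}" using assms(2,3) by blast
  then have s0: "s0 \<in> S" "2 \<le> s0" by auto
  have "phi_inv + phi_inv^2 + phi_inv ^ (s0 + 1) = (\<Sum>s\<in>{0, 1, s0}. phi_inv ^ (s + 1))"
    using s0 by (simp add: power2_eq_square)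
  also have "\<dots> \<le> golden_weight S (s0 + 1)"
    unfolding golden_weight_def using assms s0 by (intro sum_mono2) (auto simp: phi_inv_pos less_imp_le)
  also have "\<dots> \<le> 1" using S unfolding unit_golden_weight_def by blast
  finally show False using phi_inv_add_square phi_inv_pos by (smt (verit) zero_less_power)
qed

definition golden_cofinite :: "nat \<Rightarrow> nat set" where
  "golden_cofinite m = {s. even s \<and> s < 2 * m} \<union> {s. 2 * m + 1 \<le> s}"

definition golden_finite :: "nat \<Rightarrow> nat set" where
  "golden_finite m = insert (2 * m + 1) {s. even s \<and> s \<le> 2 * m}"

definition golden_sets :: "nat set set" where
  "golden_sets = range golden_cofinite \<union> range golden_finite \<union> {{s. even s}}"

lemma countable_golden_sets: "countable golden_sets"
  unfolding golden_sets_def by simp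

lemma gap_cons_golden_sets: "S \<in> golden_sets \<Longrightarrow> gap_cons S \<in> golden_sets"
proof -
  have "gap_cons (golden_cofinite m) = golden_cofinite (Suc m)"
    "gap_cons (golden_finite m) = golden_finite (Suc m)"
    "gap_cons {s. even s} = {s. even s}" for m
    unfolding set_eq_iff gap_cons_iff golden_cofinite_def golden_finite_def
    by (auto simp: le_diff_conv2)
  then show "S \<in> golden_sets \<Longrightarrow> gap_cons S \<in> golden_sets"
    unfolding golden_sets_def by auto
qed

lemma unit_golden_weight_prefix_or_golden:
  "unit_golden_weight S \<Longrightarrow> (\<forall>j<m. 2 * j \<in> S \<and> 2 * j + 1 \<notin> S) \<or> S \<in> golden_sets"
proof (induction m arbitrary: S)
  case (Suc m)
  consider "0 \<notin> S" | "0 \<in> S" "1 \<in> S" | "0 \<in> S" "1 \<notin> S" by blast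
  then show ?case
  proof cases
    case 1
    then have "S = golden_cofinite 0"
      using unit_golden_weight_0_notin[OF Suc.prems] unfolding golden_cofinite_def by simp
    then show ?thesis unfolding golden_sets_def by blast
  next
    case 2
    then have "S = golden_finite 0"
      using unit_golden_weight_0_1_in[OF Suc.prems] unfolding golden_finite_def by auto
    then show ?thesis unfolding golden_sets_def by blast
  next
    case 3
    let ?S' = "{s. s + 2 \<in> S}"
    have S: "S = gap_cons ?S'" using gap_cons_unshift[OF 3] .
    then have "unit_golden_weight ?S'" using Suc.prems unit_golden_weight_gap_consD by metis
    then have "(\<forall>j<m. 2 * j \<in> ?S' \<and> 2 * j + 1 \<notin> ?S') \<or> ?S' \<in> golden_sets" by (rule Suc.IH)
    then show ?thesis
    proof
      assume "\<forall>j<m. 2 * j \<in> ?S' \<and> 2 * j + 1 \<notin> ?S'"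
      then have "\<forall>j<Suc m. 2 * j \<in> S \<and> 2 * j + 1 \<notin> S"
        using 3 by (auto simp: less_Suc_eq_0_disj algebra_simps)
      then show ?thesis by blast
    qed (use S gap_cons_golden_sets in metis)
  qed
qed simp

lemma unit_golden_weight_golden_sets:
  assumes "unit_golden_weight S"
  shows "S \<in> golden_sets"
proof (cases "\<forall>m. \<forall>j<m. 2 * j \<in> S \<and> 2 * j + 1 \<notin> S")
  case True
  have "x \<in> S \<longleftrightarrow> even x" for x
  proof (cases "even x")
    case True
    then obtain j where "x = 2 * j" by (auto elim: evenE)
    then show ?thesis using \<open>\<forall>m. \<forall>j<m. 2 * j \<in> S \<and> 2 * j + 1 \<notin> S\<close> True by auto
  next
    case False
    then obtain j where "x = 2 * j + 1" by (auto elim: oddE)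
    then show ?thesis using \<open>\<forall>m. \<forall>j<m. 2 * j \<in> S \<and> 2 * j + 1 \<notin> S\<close> False by auto
  qed
  then have "S = {s. even s}" by auto
  then show ?thesis unfolding golden_sets_def by simp
qed (use unit_golden_weight_prefix_or_golden[OF assms] in blast)

section \<open>Specification\<close>

definition zero_runs_le :: "nat \<Rightarrow> bool list \<Rightarrow> bool" where
  "zero_runs_le M u \<longleftrightarrow> (\<forall>i k. i + k \<le> length u \<longrightarrow> (\<forall>m<k. \<not> u!(i+m)) \<longrightarrow> k \<le> M)"

lemma language_finite_gap_shiftD:
  assumes F: "finite F" and u: "u \<in> language (gap_shift F)"
  shows "gaps_in F u" "zero_runs_le (Max F) u"
proof -
  obtain n where u: "u \<in> blocks (gap_shift F) n" using u unfolding language_def by blast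
  show "gaps_in F u" using blocks_gap_shiftD(2)[OF u] .
  show "zero_runs_le (Max F) u" unfolding zero_runs_le_def
  proof (intro allI impI)
    fix i k assume "i + k \<le> length u" "\<forall>m<k. \<not> u!(i+m)"
    then obtain s where "s \<in> F" "k \<le> s" using blocks_gap_shiftD[OF u] by metis
    then show "k \<le> Max F" using Max_ge[OF F] by (meson order_trans)
  qed
qed

lemma gaps_in_frame:
  assumes gaps: "gaps_in F c" and c: "c \<noteq> []" "hd c" "last c" and M: "M \<in> F"
  shows "gaps_in F (True # replicate M False @ c @ replicate M False @ [True])"
proof -
  obtain c' where c': "c = True # c'" using c by (cases c) auto
  obtain c'' where c'': "c = c'' @ [True]" using c by (cases c rule: rev_cases) auto
  have "gaps_in F (c'' @ True # (replicate M False @ [True]))"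
    by (rule gaps_in_glue) (use gaps c'' gaps_in_single_gap[OF M] in simp_all)
  then have "gaps_in F (c @ replicate M False @ [True])" using c'' by simp
  then have right: "gaps_in F (True # (c' @ replicate M False @ [True]))" using c' by simp
  have "gaps_in F ((True # replicate M False) @ True # (c' @ replicate M False @ [True]))"
    by (rule gaps_in_glue[OF _ right]) (use gaps_in_single_gap[OF M] in simp)
  then show ?thesis using c' by simp
qed

lemma gaps_in_pad:
  assumes gaps: "gaps_in F u" and runs: "zero_runs_le M u" and M: "M \<in> F"
  obtains p q where "p \<le> M" "q \<le> M" "gaps_in F (True # replicate p False @ u @ replicate q False @ [True])"
proof (cases "True \<in> set u")
  case False
  let ?l = "length u"
  have u: "u = replicate ?l False" using replicate_False_if_True_notin[OF False] .
  have "\<forall>m<?l. \<not> u!(0+m)" using False nth_mem by fastforce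
  then have "?l \<le> M" using runs[unfolded zero_runs_le_def, rule_format, of 0 ?l] by simp
  then have eq: "True # replicate (M - ?l) False @ u @ replicate 0 False @ [True] = True # replicate M False @ [True]"
    by (subst u) (simp add: replicate_add[symmetric])
  have "gaps_in F (True # replicate (M - ?l) False @ u @ replicate 0 False @ [True])"
    unfolding eq by (rule gaps_in_single_gap[OF M])
  with diff_le_self zero_le show ?thesis by (rule that)
next
  case True
  obtain a r where ar: "u = replicate a False @ True # r" using split_first_True[OF True] by blast
  obtain y b where yb: "True # r = y @ True # replicate b False" using split_last_True[of "True # r"] by auto
  have u: "u = replicate a False @ (y @ [True]) @ replicate b False" using ar yb by simp
  have "\<forall>m<a. \<not> u!(0+m)" using u by (simp add: nth_append)
  then have aM: "a \<le> M" using runs[unfolded zero_runs_le_def, rule_format, of 0 a] u by simp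
  have "\<forall>m<b. \<not> u ! (length u - b + m)" using u by (simp add: nth_append)
  then have bM: "b \<le> M" using runs[unfolded zero_runs_le_def, rule_format, of "length u - b" b] u by simp
  have gaps_y: "gaps_in F (y @ [True])"
    using gaps_in_appendD1[of F "y @ [True]" "replicate b False"] gaps_in_appendD2[of F "replicate a False"]
      gaps u by simp
  have hd_y: "hd (y @ [True])" using yb by (cases y) auto
  have framed: "gaps_in F (True # replicate M False @ (y @ [True]) @ replicate M False @ [True])"
    by (rule gaps_in_frame[OF gaps_y _ hd_y _ M]) simp_all
  have "replicate M False = replicate (M - a) False @ replicate a False"
    "replicate M False = replicate b False @ replicate (M - b) False"
    using aM bM by (simp_all flip: replicate_add)
  then have padded: "True # replicate M False @ (y @ [True]) @ replicate M False @ [True]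
      = True # replicate (M - a) False @ u @ replicate (M - b) False @ [True]"
    unfolding u by (subst (1) \<open>replicate M False = replicate (M - a) False @ _\<close>,
        subst (1) \<open>replicate M False = replicate b False @ _\<close>) simp
  from framed have "gaps_in F (True # replicate (M - a) False @ u @ replicate (M - b) False @ [True])"
    unfolding padded .
  with diff_le_self diff_le_self show ?thesis by (rule that)
qed

lemma has_specification_finite_gap_shift:
  assumes F: "finite F" and F0: "0 \<in> F"
  shows "has_specification (gap_shift F)"
proof -
  let ?M = "Max F"
  let ?N = "2 * ?M + 1"
  have M: "?M \<in> F" using Max_in[OF F] F0 by blast
  have joined: "\<exists>w\<in>blocks (gap_shift F) ?N. u @ w @ v \<in> language (gap_shift F)"
    if u: "u \<in> language (gap_shift F)" and v: "v \<in> language (gap_shift F)" for u v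
  proof -
    obtain pu qu where pu: "qu \<le> ?M"
      and gu: "gaps_in F (True # replicate pu False @ u @ replicate qu False @ [True])"
      using gaps_in_pad[OF language_finite_gap_shiftD[OF F u] M] by blast
    obtain pv qv where pv: "pv \<le> ?M"
      and gv: "gaps_in F (True # replicate pv False @ v @ replicate qv False @ [True])"
      using gaps_in_pad[OF language_finite_gap_shiftD[OF F v] M] by blast
    define k where "k = ?N - qu - pv - 1"
    define w where "w = replicate qu False @ True # replicate k True @ replicate pv False"
    define z where "z = True # replicate pu False @ u @ w @ v @ replicate qv False"
    have right: "gaps_in F (True # replicate k True @ replicate pv False @ v @ replicate qv False @ [True])"
      by (rule gaps_in_Cons_ones[OF F0 gv])
    have left: "gaps_in F ((True # replicate pu False @ u @ replicate qu False) @ [True])"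
      using gu by simp
    have "gaps_in F ((True # replicate pu False @ u @ replicate qu False) @ True #
        (replicate k True @ replicate pv False @ v @ replicate qv False @ [True]))"
      by (rule gaps_in_glue[OF left right])
    then have z: "z \<noteq> []" "z ! 0" "gaps_in F (z @ [True])" unfolding z_def w_def by simp_all
    have "w \<in> blocks (gap_shift F) ?N"
      using infix_in_blocks_gap_shift[OF z, of "True # replicate pu False @ u" w "v @ replicate qv False"]
        pu pv unfolding z_def w_def k_def by simp
    moreover have "u @ w @ v \<in> blocks (gap_shift F) (length (u @ w @ v))"
      by (rule infix_in_blocks_gap_shift[OF z, of "True # replicate pu False" _ "replicate qv False"])
        (simp add: z_def)
    ultimately show ?thesis using blocks_subset_language by blast
  qed
  show ?thesis unfolding has_specification_def
  proof (intro exI[of _ ?N] conjI ballI)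
    fix u v assume "u \<in> language (gap_shift F)" "v \<in> language (gap_shift F)"
    then show "\<exists>w\<in>blocks (gap_shift F) ?N. u @ w @ v \<in> language (gap_shift F)" by (rule joined)
  qed simp
qed

section \<open>Entropy \<open>log \<phi>\<close> forces golden weight one\<close>

lemma geometric_tail_le:
  fixes c :: real
  assumes "0 < c" "c \<le> 2/3"
  shows "(\<Sum>s\<in>{a..<K}. c^(s+1)) \<le> 3 * c^(a+1)"
proof (cases "a \<le> K")
  case True
  have "(1 - c) * (\<Sum>s\<in>{a..<K}. c^(s+1)) \<le> c^(a+1)"
    using geometric_sum_atLeastLessThan[OF True, of c] assms by simp
  moreover have "1/3 * (\<Sum>s\<in>{a..<K}. c^(s+1)) \<le> (1 - c) * (\<Sum>s\<in>{a..<K}. c^(s+1))"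
    using assms by (intro mult_right_mono sum_nonneg) auto
  ultimately show ?thesis by simp
qed (use assms in simp)

lemma scaled_golden_weights_le_1:
  assumes weights: "\<forall>K. golden_weight S K \<le> 1 - e"
    and t: "1 \<le> t" "t * phi_inv \<le> 2/3" and head: "t^K0 * (1 - e) \<le> 1 - e/2"
    and tail: "2 * (2/3)^K0 \<le> e/2"
  shows "(\<Sum>s\<in>S \<inter> {..<K}. (t * phi_inv)^(s+1)) \<le> 1"
proof -
  let ?c = "t * phi_inv" and ?A = "S \<inter> {..<K}"
  have c: "0 < ?c" using t phi_inv_pos by simp
  have "(\<Sum>s\<in>?A \<inter> {..<K0}. ?c^(s+1)) \<le> (\<Sum>s\<in>?A \<inter> {..<K0}. t^K0 * phi_inv^(s+1))"
  proof (rule sum_mono)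
    fix s assume "s \<in> ?A \<inter> {..<K0}"
    then have "t^(s+1) \<le> t^K0" using t by (intro power_increasing) auto
    then show "?c^(s+1) \<le> t^K0 * phi_inv^(s+1)"
      using phi_inv_pos by (simp add: power_mult_distrib mult_right_mono)
  qed
  also have "\<dots> = t^K0 * golden_weight S (min K K0)"
  proof -
    have "?A \<inter> {..<K0} = S \<inter> {..<min K K0}" by auto
    then show ?thesis unfolding golden_weight_def by (simp add: sum_distrib_left)
  qed
  also have "\<dots> \<le> t^K0 * (1 - e)"
    using weights t by (intro mult_left_mono) auto
  finally have "(\<Sum>s\<in>?A \<inter> {..<K0}. ?c^(s+1)) \<le> 1 - e/2" using head by linarith
  moreover have "(\<Sum>s\<in>?A - {..<K0}. ?c^(s+1)) \<le> (\<Sum>s\<in>{K0..<K}. ?c^(s+1))"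
    using c by (intro sum_mono2) auto
  moreover have "\<dots> \<le> 3 * ?c^(K0+1)" by (rule geometric_tail_le) (use c t in auto)
  moreover have "\<dots> \<le> 3 * (2/3)^(K0+1)" using c t by (intro mult_left_mono power_mono) auto
  moreover have "(\<Sum>s\<in>?A. ?c^(s+1)) = (\<Sum>s\<in>?A \<inter> {..<K0}. ?c^(s+1)) + (\<Sum>s\<in>?A - {..<K0}. ?c^(s+1))"
    by (rule sum.Int_Diff) simp
  ultimately show ?thesis using tail by simp
qed

text \<open>A uniform gap below \<open>1\<close> in the golden weights survives replacing \<open>\<phi>\<close> by \<open>\<phi>/t\<close>
  for some \<open>t > 1\<close>: the first \<open>K0\<close> terms grow by at most the factor \<open>t^K0\<close>, and the tail
  stays geometrically small.\<close>

lemma golden_weights_gap_imp_smaller_root: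
  assumes e: "0 < e" and weights: "\<forall>K. golden_weight S K \<le> 1 - e"
  obtains \<rho> where "1 \<le> \<rho>" "\<rho> < phi" "\<forall>K. (\<Sum>s\<in>S \<inter> {..<K}. (1/\<rho>)^(s+1)) \<le> 1"
proof -
  define e' where "e' = min e (1/2)"
  have e': "0 < e'" "e' \<le> 1/2" "\<forall>K. golden_weight S K \<le> 1 - e'"
    using e weights unfolding e'_def by (auto intro: order_trans)
  obtain K0 where K0: "(2/3::real) ^ K0 < e' / 4" using real_arch_pow_inv[of "e'/4" "2/3"] e' by auto
  then have K0_pos: "0 < K0" using e' by (intro gr0I) simp
  define y where "y = (1 - e'/2) / (1 - e')"
  have y: "1 < y" unfolding y_def using e' by (simp add: field_simps)
  define t where "t = min (2 * phi / 3) (root K0 y)"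
  have phi_ge: "3/2 < phi"
    unfolding phi_def using real_less_rsqrt[of 2 5] by simp
  have t: "1 < t" "t \<le> root K0 y" "t \<le> 2 * phi / 3"
    unfolding t_def using phi_ge real_root_gt_1_iff[OF K0_pos] y by auto
  have "t ^ K0 \<le> y"
    using power_mono[OF t(2), of K0] t(1) real_root_pow_pos[OF K0_pos, of y] y by simp
  then have head: "t ^ K0 * (1 - e') \<le> 1 - e'/2"
    using e' mult_right_mono[of "t ^ K0" y "1 - e'"] unfolding y_def by simp
  have "t * phi_inv \<le> 2/3" using t(3) phi_gt_1 unfolding phi_inv_def by (simp add: field_simps)
  then have "\<forall>K. (\<Sum>s\<in>S \<inter> {..<K}. (t * phi_inv)^(s+1)) \<le> 1"
    using scaled_golden_weights_le_1[OF e'(3) less_imp_le[OF t(1)] _ head] K0 by simp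
  moreover have "1 / (phi / t) = t * phi_inv" "1 \<le> phi / t" "phi / t < phi"
    using t phi_gt_1 unfolding phi_inv_def by (auto simp: field_simps)
  ultimately show ?thesis using that[of "phi / t"] by simp
qed

lemma golden_weight_le_1_if_entropy:
  assumes h: "has_entropy (gap_shift S) (log 2 phi)"
  shows "golden_weight S K \<le> 1"
proof (rule ccontr)
  assume "\<not> golden_weight S K \<le> 1"
  then have \<sigma>: "1 < golden_weight S K" by simp
  define F where "F = S \<inter> {..<K}"
  have F: "finite F" "F \<noteq> {}" "F \<subseteq> S" using \<sigma> unfolding F_def golden_weight_def by auto
  let ?M = "Max F"
  define t where "t = root (?M + 1) (golden_weight S K)"
  have t: "1 < t" "t ^ (?M + 1) = golden_weight S K"
    unfolding t_def using \<sigma> real_root_gt_1_iff[of "?M + 1"] real_root_pow_pos[of "?M + 1"]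
    by (simp_all del: real_root_gt_1_iff)
  have "1 = golden_weight S K * (1/t)^(?M+1)"
    using t(2) \<sigma> by (simp add: power_one_over)
  also have "\<dots> = (\<Sum>s\<in>F. phi_inv^(s+1) * (1/t)^(?M+1))"
    unfolding F_def golden_weight_def by (rule sum_distrib_right)
  also have "\<dots> \<le> (\<Sum>s\<in>F. (1/(phi * t))^(s+1))"
  proof (rule sum_mono)
    fix s assume "s \<in> F"
    then have "(1/t)^(?M+1) \<le> (1/t)^(s+1)"
      using t Max_ge[OF F(1)] by (intro power_decreasing) auto
    then have "phi_inv^(s+1) * (1/t)^(?M+1) \<le> phi_inv^(s+1) * (1/t)^(s+1)"
      using phi_inv_pos by (intro mult_left_mono) auto
    also have "\<dots> = (1/(phi * t))^(s+1)"
      unfolding phi_inv_def by (simp add: power_mult_distrib[symmetric])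
    finally show "phi_inv^(s+1) * (1/t)^(?M+1) \<le> (1/(phi * t))^(s+1)" .
  qed
  finally have weights: "1 \<le> (\<Sum>s\<in>F. (1/(phi * t))^(s+1))" .
  have "1 \<le> phi * t" using phi_gt_1 t(1) mult_mono[of 1 phi 1 t] by simp
  then have "log 2 (phi * t) \<le> log 2 phi" using gap_shift_entropy_ge[OF h F _ weights] by blast
  moreover have "log 2 phi < log 2 (phi * t)" using phi_gt_1 t(1) by simp
  ultimately show False by simp
qed

lemma unit_golden_weight_if_entropy:
  assumes h: "has_entropy (gap_shift S) (log 2 phi)"
  shows "unit_golden_weight S"
proof -
  have "\<exists>K. 1 - e < golden_weight S K" if e: "0 < e" for e
  proof (rule ccontr)
    assume "\<not> ?thesis"
    then have "\<forall>K. golden_weight S K \<le> 1 - e" by (simp add: not_less)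
    then obtain \<rho> where \<rho>: "1 \<le> \<rho>" "\<rho> < phi" "\<forall>K. (\<Sum>s\<in>S\<inter>{..<K}. (1/\<rho>)^(s+1)) \<le> 1"
      using golden_weights_gap_imp_smaller_root[OF e] by blast
    then show False using gap_shift_entropy_le[OF h \<rho>(1,3)] by simp
  qed
  then show ?thesis unfolding unit_golden_weight_def using golden_weight_le_1_if_entropy[OF h] by blast
qed

section \<open>The finite golden gap sets\<close>

lemma even_atMost_eq_image: "{s. even s \<and> s \<le> 2 * m} = (\<lambda>j. 2 * j) ` {..m::nat}"
  by (auto elim!: evenE)

lemma finite_golden_finite: "finite (golden_finite m)"
  unfolding golden_finite_def even_atMost_eq_image by simp

lemma inj_golden_finite: "inj golden_finite"
proof (rule injI)
  fix m m' assume "golden_finite m = golden_finite m'"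
  then have "2 * m + 1 \<in> golden_finite m'" unfolding golden_finite_def by blast
  then show "m = m'" unfolding golden_finite_def by auto
qed

lemma golden_finite_weight: "(\<Sum>s\<in>golden_finite m. phi_inv^(s+1)) = 1"
proof -
  have "(\<Sum>j\<le>m. phi_inv^(2*j+1)) + phi_inv^(2*m+2) = 1"
  proof (induction m)
    case 0 then show ?case using phi_inv_add_square by (simp add: power2_eq_square)
  next
    case (Suc m)
    have "phi_inv^(2 * Suc m + 1) + phi_inv^(2 * Suc m + 2) = phi_inv^(2*m+2) * (phi_inv + phi_inv^2)"
      by (simp add: power_add[symmetric] algebra_simps power2_eq_square)
    then show ?case using Suc.IH phi_inv_add_square by simp
  qed
  moreover have "(\<Sum>s\<in>golden_finite m. phi_inv^(s+1))
      = phi_inv^(2*m+2) + (\<Sum>s\<in>(\<lambda>j. 2 * j) ` {..m}. phi_inv^(s+1))"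
    unfolding golden_finite_def even_atMost_eq_image by (subst sum.insert) auto
  moreover have "(\<Sum>s\<in>(\<lambda>j. 2 * j) ` {..m}. phi_inv^(s+1)) = (\<Sum>j\<le>m. phi_inv^(2*j+1))"
    by (subst sum.reindex) (auto simp: inj_on_def)
  ultimately show ?thesis by simp
qed

lemma has_entropy_golden_finite: "has_entropy (gap_shift (golden_finite m)) (log 2 phi)"
  using has_entropy_finite_gap_shift[OF finite_golden_finite _ less_imp_le[OF phi_gt_1]]
    golden_finite_weight[of m] unfolding phi_inv_def by (auto simp: golden_finite_def)

theorem proposition4p4:
  defines "E \<equiv> {gap_shift S | S. S \<noteq> {} \<and>
                  has_entropy (gap_shift S) (log 2 ((1 + sqrt 5) / 2))}"
  shows "countable E \<and> infinite E \<and> infinite {X \<in> E. has_specification X}"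
proof -
  have E: "E = {gap_shift S | S. S \<noteq> {} \<and> has_entropy (gap_shift S) (log 2 phi)}"
    unfolding E_def phi_def ..
  have "E \<subseteq> gap_shift ` golden_sets"
  proof
    fix X assume "X \<in> E"
    then obtain S where "X = gap_shift S" "has_entropy (gap_shift S) (log 2 phi)" unfolding E by blast
    then show "X \<in> gap_shift ` golden_sets"
      using unit_golden_weight_golden_sets[OF unit_golden_weight_if_entropy] by blast
  qed
  then have "countable E" by (rule countable_subset) (intro countable_image countable_golden_sets)
  have "gap_shift (golden_finite m) \<in> {X \<in> E. has_specification X}" for m
  proof -
    have "0 \<in> golden_finite m" unfolding golden_finite_def by simp
    then have "gap_shift (golden_finite m) \<in> E" "has_specification (gap_shift (golden_finite m))"
      unfolding E using has_entropy_golden_finite has_specification_finite_gap_shift[OF finite_golden_finite]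
      by blast+
    then show ?thesis by simp
  qed
  then have "range (gap_shift \<circ> golden_finite) \<subseteq> {X \<in> E. has_specification X}" by auto
  moreover have "infinite (range (gap_shift \<circ> golden_finite))"
    by (rule range_inj_infinite) (rule inj_compose[OF inj_gap_shift inj_golden_finite])
  ultimately have spec: "infinite {X \<in> E. has_specification X}" by (rule infinite_super)
  have "{X \<in> E. has_specification X} \<subseteq> E" by blast
  then have "infinite E" using spec by (rule infinite_super)
  with \<open>countable E\<close> spec show ?thesis by blast
qed

end
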